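(* Let $F,\theta \geq 1$ be integers and let $\eta_0(x)$, $x \in \mathbb{Z}$, be i.i.d. uniform on $\{0,1\}^F$. For each edge $e = (x,x+1)$ let $\zeta_0(e) = H(\eta_0(x),\eta_0(x+1))$, let $(X_e)_e$ be random variables which, conditionally on $\eta_0$, are independent with $X_e$ Bernoulli with success probability $1 - \zeta_0(e)/F$, and set $\phi(e) = -\zeta_0(e)$ if $\zeta_0(e) \leq \theta$ and $\phi(e) = \zeta_0(e) + 2(X_e - \theta)$ if $\zeta_0(e) > \theta$. Then there exist $C_1 < \infty$ and $c_1 > 0$ such that for all $\epsilon > 0$ and all $N \geq 1$, $$P\Big(\sum_{e \in (-N,0)} \phi(e) \leq N(E\phi(e) - \epsilon)\Big) \leq C_1 \exp(-c_1 N \epsilon^2).$$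
   Context: $H(u,v) = \#\{i : u_i \neq v_i\}$ is the Hamming distance on $\{0,1\}^F$. Edges $(x,x+1)$ of $\mathbb{Z}$ are identified with their midpoints $x+1/2$, so $e \in (-N,0)$ ranges over the $N$ edges $(x,x+1)$ with $x = -N,\ldots,-1$. $E\phi(e)$ does not depend on $e$. *)

theory Defs
  imports "HOL-Probability.Probability"
begin

text \<open>Configurations in {0,1}^F are represented as boolean lists of length F.\<close>

definition configs :: "nat \<Rightarrow> bool list set" where
  "configs F = {v. length v = F}"

definition hamming :: "nat \<Rightarrow> bool list \<Rightarrow> bool list \<Rightarrow> nat" where
  "hamming F u v = card {i. i < F \<and> u ! i \<noteq> v ! i}"

definition zeta0 :: "nat \<Rightarrow> (int \<Rightarrow> bool list) \<Rightarrow> int \<Rightarrow> nat" where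
  "zeta0 F \<eta> x = hamming F (\<eta> x) (\<eta> (x + 1))"

text \<open>phi of the edge (x, x+1); X x is the Bernoulli variable attached to that edge.\<close>
definition phi :: "nat \<Rightarrow> nat \<Rightarrow> (int \<Rightarrow> bool list) \<Rightarrow> (int \<Rightarrow> bool) \<Rightarrow> int \<Rightarrow> real" where
  "phi F \<theta> \<eta> X x =
     (if zeta0 F \<eta> x \<le> \<theta> then - real (zeta0 F \<eta> x)
      else real (zeta0 F \<eta> x) + 2 * (of_bool (X x) - real \<theta>))"

text \<open>This is the finite-dimensional marginal of the
  full model; everything else is irrelevant for the event considered.\<close>
definition model :: "nat \<Rightarrow> nat \<Rightarrow> ((int \<Rightarrow> bool list) \<times> (int \<Rightarrow> bool)) pmf" where
  "model F N =
     do { \<eta> \<leftarrow> Pi_pmf {- int N .. 0} [] (\<lambda>_. pmf_of_set (configs F));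
          X \<leftarrow> Pi_pmf {- int N .. -1} False
                 (\<lambda>x. bernoulli_pmf (1 - real (zeta0 F \<eta> x) / real F));
          return_pmf (\<eta>, X) }"

text \<open>E phi(e) (independent of e): mean of phi for the edge (-1,0) in the one-edge model.\<close>
definition Ephi :: "nat \<Rightarrow> nat \<Rightarrow> real" where
  "Ephi F \<theta> = measure_pmf.expectation (model F 1) (\<lambda>(\<eta>, X). phi F \<theta> \<eta> X (-1))"

end

theory Submission
  imports Defs
begin

(*
  The Hamming distance of neighbouring configurations is the Hamming weight of their
  increment \<eta>(x) xor \<eta>(x+1), and the increments of an i.i.d. uniform sequence on {0,1}^F are
  again i.i.d. uniform.  Hence the pairs (\<zeta>\<^sub>0(e), X\<^sub>e) along the edges are i.i.d., and so are the
  \<phi>(e), which take values in [-(F + 2\<theta>), F + 2].  Hoeffding's inequality then gives the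
  bound with C\<^sub>1 = 1 and c\<^sub>1 = 2 / (2F + 2\<theta> + 2)\<^sup>2.
*)

lemma Pi_pmf_Hoeffding_ineq_le:
  fixes p :: "'b pmf" and f :: "'b \<Rightarrow> real" and I :: "'i set"
  assumes "finite I" "I \<noteq> {}" "a < b" "\<And>v. v \<in> set_pmf p \<Longrightarrow> f v \<in> {a..b}" "\<epsilon> \<ge> 0"
  shows "measure_pmf.prob (Pi_pmf I dflt (\<lambda>_. p))
           {y. (\<Sum>i\<in>I. f (y i)) \<le> real (card I) * (measure_pmf.expectation p f - \<epsilon>)}
         \<le> exp (- 2 * real (card I) * \<epsilon>\<^sup>2 / (b - a)\<^sup>2)"
proof -
  let ?P = "Pi_pmf I dflt (\<lambda>_. p)"
  obtain i0 where i0: "i0 \<in> I" using assms(2) by blast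
  have component: "map_pmf (\<lambda>y. y i) ?P = p" if "i \<in> I" for i
    by (simp add: Pi_pmf_component[OF assms(1)] that)
  have distr_component: "distr ?P borel (\<lambda>y. f (y i)) = distr p borel f" if "i \<in> I" for i
    using distr_distr[of f "count_space UNIV" borel "\<lambda>y. y i" "measure_pmf ?P"]
    by (simp add: comp_def map_pmf_rep_eq[symmetric] component[OF that])
  have mean: "measure_pmf.expectation ?P (\<lambda>y. f (y i0)) = measure_pmf.expectation p f"
    using integral_map_pmf[of "\<lambda>y. y i0" ?P f] by (simp add: component[OF i0])
  interpret Hoeffding_ineq_iid ?P I "\<lambda>i y. f (y i)" "\<lambda>y. f (y i0)" a b
    "measure_pmf.expectation ?P (\<lambda>y. f (y i0))"
  proof unfold_locales
    show "prob_space.indep_vars ?P (\<lambda>_. borel) (\<lambda>i y. f (y i)) I"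
      by (rule prob_space.indep_vars_compose2[OF _ indep_vars_Pi_pmf[OF assms(1)]])
         (auto intro: measure_pmf.prob_space_axioms)
    show "AE y in ?P. f (y i0) \<in> {a..b}"
      using assms(4) i0 by (auto intro!: AE_pmfI simp: set_Pi_pmf[OF assms(1)] PiE_dflt_def)
  qed (use assms(1) distr_component i0 in auto)
  have "card I > 0" using assms(1,2) by (simp add: card_gt_0_iff)
  hence "{y. (\<Sum>i\<in>I. f (y i)) \<le> real (card I) * (measure_pmf.expectation p f - \<epsilon>)}
      = {y \<in> space (measure_pmf ?P). (\<Sum>i\<in>I. f (y i)) / real (card I) \<le> measure_pmf.expectation ?P (\<lambda>y. f (y i0)) - \<epsilon>}"
    by (auto simp: mean field_simps)
  thus ?thesis
    using Hoeffding_ineq_le'[OF assms(5,3,2)] by (simp add: mult_ac)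
qed

lemma finite_configs: "finite (configs F)"
  unfolding configs_def using finite_lists_length_eq[of "UNIV :: bool set" F] by simp

lemma configs_nonempty: "configs F \<noteq> {}"
  unfolding configs_def by (auto intro: exI[of _ "replicate F False"])

lemma set_pmf_uniform_configs [simp]: "set_pmf (pmf_of_set (configs F)) = configs F"
  using finite_configs configs_nonempty by simp

lemma hamming_le: "hamming F u v \<le> F"
  unfolding hamming_def by (rule order_trans[OF card_mono[of "{..<F}"]]) auto

lemma hamming_map2_xor:
  assumes "u \<in> configs F" "v \<in> configs F"
  shows "hamming F u v = hamming F (map2 (\<noteq>) u v) (replicate F False)"
  unfolding hamming_def using assms by (auto simp: configs_def intro!: arg_cong[where f = card])

lemma nn_integral_uniform_hamming_translate:
  assumes "v \<in> configs F"
  shows "(\<integral>\<^sup>+u. K (hamming F u v) \<partial>pmf_of_set (configs F))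
       = (\<integral>\<^sup>+u. K (hamming F u (replicate F False)) \<partial>pmf_of_set (configs F))"
proof -
  let ?t = "\<lambda>u. map2 (\<noteq>) u v"
  have involution: "?t (?t u) = u" and closed: "?t u \<in> configs F" if "u \<in> configs F" for u
    using that assms by (auto simp: configs_def intro!: nth_equalityI)
  have "(\<Sum>u\<in>configs F. K (hamming F u v)) = (\<Sum>u\<in>configs F. K (hamming F u (replicate F False)))"
    by (rule sum.reindex_bij_witness[where i = ?t and j = ?t])
       (use involution closed hamming_map2_xor assms in auto)
  thus ?thesis
    by (simp add: nn_integral_pmf_of_set[OF configs_nonempty finite_configs])
qed

lemma nn_integral_prod_hamming_increments:
  "(\<integral>\<^sup>+\<eta>. (\<Prod>x\<in>{- int N .. -1}. K x (hamming F (\<eta> x) (\<eta> (x + 1))))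
       \<partial>Pi_pmf {- int N .. 0} [] (\<lambda>_. pmf_of_set (configs F)))
   = (\<Prod>x\<in>{- int N .. -1}. \<integral>\<^sup>+u. K x (hamming F u (replicate F False)) \<partial>pmf_of_set (configs F))"
proof (induction N)
  case 0
  then show ?case by simp
next
  case (Suc N)
  \<comment> \<open>Integrating out the leftmost vertex peels off one factor: for fixed \<open>\<eta> (- N)\<close>,
    the increment \<open>\<eta> (- N - 1) xor \<eta> (- N)\<close> is again uniform.\<close>
  let ?U = "pmf_of_set (configs F)"
  let ?P = "Pi_pmf {- int N .. 0} [] (\<lambda>_. ?U)"
  let ?a = "- int (Suc N)"
  define R where "R \<eta> = (\<Prod>x\<in>{- int N .. -1}. K x (hamming F (\<eta> x) (\<eta> (x + 1))))" for \<eta>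
  have vertices: "{- int (Suc N) .. 0} = insert ?a {- int N .. 0}"
    and edges: "{- int (Suc N) .. -1} = insert ?a {- int N .. -1}" by auto
  have split: "(\<Prod>x\<in>{- int (Suc N) .. -1}. K x (hamming F ((g(?a := y)) x) ((g(?a := y)) (x + 1))))
        = K ?a (hamming F y (g (- int N))) * R g" for g y
  proof -
    have "(\<Prod>x\<in>{- int N .. -1}. K x (hamming F ((g(?a := y)) x) ((g(?a := y)) (x + 1)))) = R g"
      unfolding R_def by (intro prod.cong) auto
    moreover have "?a + 1 = - int N" by simp
    ultimately show ?thesis unfolding edges by (subst prod.insert) auto
  qed
  have "(\<integral>\<^sup>+\<eta>. (\<Prod>x\<in>{- int (Suc N) .. -1}. K x (hamming F (\<eta> x) (\<eta> (x + 1))))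
          \<partial>Pi_pmf {- int (Suc N) .. 0} [] (\<lambda>_. ?U))
     = (\<integral>\<^sup>+g. \<integral>\<^sup>+y. K ?a (hamming F y (g (- int N))) * R g \<partial>?U \<partial>?P)"
    unfolding vertices split[symmetric]
    by (subst Pi_pmf_insert, simp, simp, subst pair_commute_pmf,
        simp only: nn_integral_map_pmf nn_integral_pair_pmf' prod.case)
  also have "\<dots> = (\<integral>\<^sup>+g. (\<integral>\<^sup>+u. K ?a (hamming F u (replicate F False)) \<partial>?U) * R g \<partial>?P)"
  proof (intro nn_integral_cong_AE AE_pmfI)
    fix g assume "g \<in> set_pmf ?P"
    hence "g (- int N) \<in> configs F" by (auto simp: set_Pi_pmf PiE_dflt_def)
    thus "(\<integral>\<^sup>+y. K ?a (hamming F y (g (- int N))) * R g \<partial>?U)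
        = (\<integral>\<^sup>+u. K ?a (hamming F u (replicate F False)) \<partial>?U) * R g"
      by (simp add: nn_integral_multc nn_integral_uniform_hamming_translate)
  qed
  also have "\<dots> = (\<Prod>x\<in>{- int (Suc N) .. -1}. \<integral>\<^sup>+u. K x (hamming F u (replicate F False)) \<partial>?U)"
    using Suc.IH unfolding R_def edges by (simp add: nn_integral_cmult)
  finally show ?case .
qed

definition edge_law :: "nat \<Rightarrow> (nat \<times> bool) pmf" where
  "edge_law F =
     do { z \<leftarrow> map_pmf (\<lambda>u. hamming F u (replicate F False)) (pmf_of_set (configs F));
          b \<leftarrow> bernoulli_pmf (1 - real z / real F);
          return_pmf (z, b) }"

lemma nn_integral_model_prod_edges:
  "(\<integral>\<^sup>+p. (\<Prod>x\<in>{- int N .. -1}. G x (zeta0 F (fst p) x, snd p x)) \<partial>model F N)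
   = (\<Prod>x\<in>{- int N .. -1}. \<integral>\<^sup>+e. G x e \<partial>edge_law F)"
proof -
  define K where "K x z = (\<integral>\<^sup>+b. G x (z, b) \<partial>bernoulli_pmf (1 - real z / real F))" for x z
  have "(\<integral>\<^sup>+p. (\<Prod>x\<in>{- int N .. -1}. G x (zeta0 F (fst p) x, snd p x)) \<partial>model F N)
     = (\<integral>\<^sup>+\<eta>. (\<Prod>x\<in>{- int N .. -1}. K x (hamming F (\<eta> x) (\<eta> (x + 1))))
          \<partial>Pi_pmf {- int N .. 0} [] (\<lambda>_. pmf_of_set (configs F)))"
    unfolding model_def K_def zeta0_def
    by (simp add: nn_integral_return nn_integral_prod_Pi_pmf[where f = "\<lambda>x b. G x (_ x, b)"])
  also have "\<dots> = (\<Prod>x\<in>{- int N .. -1}. \<integral>\<^sup>+e. G x e \<partial>edge_law F)"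
    by (subst nn_integral_prod_hamming_increments) (simp add: edge_law_def K_def)
  finally show ?thesis .
qed

definition edge_values :: "nat \<Rightarrow> nat \<Rightarrow> (int \<Rightarrow> bool list) \<times> (int \<Rightarrow> bool) \<Rightarrow> int \<Rightarrow> nat \<times> bool" where
  "edge_values F N = (\<lambda>(\<eta>, X) x. if x \<in> {- int N .. -1} then (zeta0 F \<eta> x, X x) else (0, False))"

lemma map_pmf_edge_values_model:
  "map_pmf (edge_values F N) (model F N) = Pi_pmf {- int N .. -1} (0, False) (\<lambda>_. edge_law F)"
proof (rule pmf_eqI)
  fix f :: "int \<Rightarrow> nat \<times> bool"
  let ?I = "{- int N .. -1}"
  show "pmf (map_pmf (edge_values F N) (model F N)) f = pmf (Pi_pmf ?I (0, False) (\<lambda>_. edge_law F)) f"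
  proof (cases "\<forall>x. x \<notin> ?I \<longrightarrow> f x = (0, False)")
    case True
    have indicator_prod: "indicator {f} (edge_values F N p)
        = (\<Prod>x\<in>?I. indicator {f x} (zeta0 F (fst p) x, snd p x) :: ennreal)" for p
      using True by (auto simp: edge_values_def indicator_def split: prod.splits)
    have "ennreal (pmf (map_pmf (edge_values F N) (model F N)) f)
        = (\<integral>\<^sup>+y. indicator {f} y \<partial>map_pmf (edge_values F N) (model F N))"
      by (simp add: emeasure_pmf_single del: nn_integral_map_pmf)
    also have "\<dots> = (\<integral>\<^sup>+p. indicator {f} (edge_values F N p) \<partial>model F N)"
      by (rule nn_integral_map_pmf)
    also have "\<dots> = (\<Prod>x\<in>?I. \<integral>\<^sup>+e. indicator {f x} e \<partial>edge_law F)"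
      unfolding indicator_prod by (rule nn_integral_model_prod_edges)
    also have "\<dots> = ennreal (\<Prod>x\<in>?I. pmf (edge_law F) (f x))"
      by (simp add: emeasure_pmf_single prod_ennreal)
    also have "\<dots> = ennreal (pmf (Pi_pmf ?I (0, False) (\<lambda>_. edge_law F)) f)"
      by (subst pmf_Pi') (use True in auto)
    finally show ?thesis by (simp add: pmf_nonneg)
  next
    case False
    hence "f \<notin> set_pmf (map_pmf (edge_values F N) (model F N))"
      by (auto simp: edge_values_def)
    thus ?thesis
      using False by (simp add: set_pmf_eq pmf_Pi_outside)
  qed
qed

definition edge_score :: "nat \<Rightarrow> nat \<times> bool \<Rightarrow> real" where
  "edge_score \<theta> = (\<lambda>(z, b). if z \<le> \<theta> then - real z else real z + 2 * (of_bool b - real \<theta>))"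

lemma phi_eq_edge_score:
  "x \<in> {- int N .. -1} \<Longrightarrow> phi F \<theta> \<eta> X x = edge_score \<theta> (edge_values F N (\<eta>, X) x)"
  by (simp add: phi_def edge_score_def edge_values_def)

lemma edge_score_bounds:
  assumes "e \<in> set_pmf (edge_law F)"
  shows "edge_score \<theta> e \<in> {- (real F + 2 * real \<theta>) .. real F + 2}"
proof -
  obtain u b where "e = (hamming F u (replicate F False), b)"
    using assms by (auto simp: edge_law_def)
  moreover have "real (hamming F u (replicate F False)) \<le> real F"
    using hamming_le by simp
  ultimately show ?thesis by (auto simp: edge_score_def)
qed

lemma Ephi_eq_expectation_edge_law:
  "Ephi F \<theta> = measure_pmf.expectation (edge_law F) (edge_score \<theta>)"
proof -
  have "Ephi F \<theta> = measure_pmf.expectation (model F 1) (\<lambda>p. edge_score \<theta> (edge_values F 1 p (-1)))"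
    unfolding Ephi_def by (intro Bochner_Integration.integral_cong) (auto simp: phi_eq_edge_score)
  also have "\<dots> = measure_pmf.expectation (Pi_pmf {- int 1 .. -1} (0, False) (\<lambda>_. edge_law F))
                      (\<lambda>y. edge_score \<theta> (y (-1)))"
    by (simp only: map_pmf_edge_values_model[of F 1, symmetric] integral_map_pmf)
  also have "\<dots> = measure_pmf.expectation (edge_law F) (edge_score \<theta>)"
    using integral_map_pmf[of "\<lambda>y. y (-1)" "Pi_pmf {-1 :: int} (0, False) (\<lambda>_. edge_law F)" "edge_score \<theta>"]
    by (simp add: Pi_pmf_component)
  finally show ?thesis .
qed

lemma prob_sum_phi_le_eq_Pi_pmf:
  "measure_pmf.prob (model F N) {(\<eta>, X). (\<Sum>x\<in>{- int N .. -1}. phi F \<theta> \<eta> X x) \<le> c}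
   = measure_pmf.prob (Pi_pmf {- int N .. -1} (0, False) (\<lambda>_. edge_law F))
       {y. (\<Sum>x\<in>{- int N .. -1}. edge_score \<theta> (y x)) \<le> c}"
proof -
  have "(\<Sum>x\<in>{- int N .. -1}. phi F \<theta> \<eta> X x)
      = (\<Sum>x\<in>{- int N .. -1}. edge_score \<theta> (edge_values F N (\<eta>, X) x))" for \<eta> X
    by (intro sum.cong refl phi_eq_edge_score)
  hence "{(\<eta>, X). (\<Sum>x\<in>{- int N .. -1}. phi F \<theta> \<eta> X x) \<le> c}
      = edge_values F N -` {y. (\<Sum>x\<in>{- int N .. -1}. edge_score \<theta> (y x)) \<le> c}"
    by auto
  thus ?thesis
    by (simp flip: map_pmf_edge_values_model)
qed

theorem lemma3:
  fixes F \<theta> :: nat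
  assumes "F \<ge> 1" and "\<theta> \<ge> 1"
  shows "\<exists>C1 c1 :: real. c1 > 0 \<and>
    (\<forall>\<epsilon> :: real. \<forall>N :: nat. \<epsilon> > 0 \<longrightarrow> N \<ge> 1 \<longrightarrow>
       measure_pmf.prob (model F N)
         {(\<eta>, X). (\<Sum>x\<in>{- int N .. -1}. phi F \<theta> \<eta> X x) \<le> real N * (Ephi F \<theta> - \<epsilon>)}
       \<le> C1 * exp (- c1 * real N * \<epsilon>\<^sup>2))"
proof -
  define W where "W = 2 * real F + 2 * real \<theta> + 2"
  show ?thesis
  proof (rule exI[of _ 1], rule exI[of _ "2 / W\<^sup>2"], intro conjI allI impI)
    show "0 < 2 / W\<^sup>2" by (simp add: W_def)
  next
    fix \<epsilon> :: real and N :: nat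
    assume "\<epsilon> > 0" "N \<ge> 1"
    let ?I = "{- int N .. -1}"
    have "measure_pmf.prob (model F N)
            {(\<eta>, X). (\<Sum>x\<in>?I. phi F \<theta> \<eta> X x) \<le> real N * (Ephi F \<theta> - \<epsilon>)}
          = measure_pmf.prob (Pi_pmf ?I (0, False) (\<lambda>_. edge_law F)) {y. (\<Sum>x\<in>?I. edge_score \<theta> (y x))
              \<le> real (card ?I) * (measure_pmf.expectation (edge_law F) (edge_score \<theta>) - \<epsilon>)}"
      by (simp add: prob_sum_phi_le_eq_Pi_pmf Ephi_eq_expectation_edge_law)
    also have "\<dots> \<le> exp (- 2 * real (card ?I) * \<epsilon>\<^sup>2 / (real F + 2 - - (real F + 2 * real \<theta>))\<^sup>2)"
      by (intro Pi_pmf_Hoeffding_ineq_le edge_score_bounds) (use \<open>\<epsilon> > 0\<close> \<open>N \<ge> 1\<close> in auto)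
    also have "real F + 2 - - (real F + 2 * real \<theta>) = W" by (simp add: W_def)
    finally show "measure_pmf.prob (model F N)
        {(\<eta>, X). (\<Sum>x\<in>?I. phi F \<theta> \<eta> X x) \<le> real N * (Ephi F \<theta> - \<epsilon>)}
      \<le> 1 * exp (- (2 / W\<^sup>2) * real N * \<epsilon>\<^sup>2)"
      by simp
  qed
qed

end
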